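(* Let $S$ be a profinite semigroup and let $\mathscr F$ be a fundamental system of entourages for $S$ consisting of open fully invariant congruences. For $\rho\in\mathscr F$, let $r_\rho\colon \operatorname{End} S\to \operatorname{End}(S/\rho)$ be the natural map sending $f$ to the induced endomorphism $[s]_\rho\mapsto [f(s)]_\rho$. Then $r_\rho$ is continuous (with $\operatorname{End} S$ carrying the compact-open topology), so its kernel $\widehat\rho=\{(f,g): r_\rho(f)=r_\rho(g)\}$ is an open congruence on $\operatorname{End} S$. Setting $\widehat{\mathscr F}=\{\widehat\rho\mid \rho\in\mathscr F\}$, one has $$\operatorname{End} S\cong \varprojlim_{\widehat\rho\in\widehat{\mathscr F}} \operatorname{End} S/\widehat\rho .$$ Analogously, if $\mathscr F$ is a fundamental system of entourages for $S$ consisting of open characteristic congruences, then the corresponding maps $r_\rho\colon\operatorname{Aut} S\to\operatorname{Aut}(S/\rho)$ are continuous, their kernels $\widehat\rho$ are open congruences on $\operatorname{Aut} S$, and $\operatorname{Aut} S\cong\varprojlim_{\widehat\rho\in\widehat{\mathscr F}}\operatorname{Aut} S/\widehat\rho$.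
   Context: $\operatorname{End} S$ is the monoid of continuous endomorphisms and $\operatorname{Aut} S$ the group of continuous automorphisms of $S$, with the compact-open topology. A congruence $\rho$ on $S$ is open if it is an open subset of $S\times S$; fully invariant if for every continuous endomorphism $f$ of $S$, $(x,y)\in\rho$ implies $(f(x),f(y))\in\rho$; characteristic if the same holds for every continuous automorphism $f$. A fundamental system of entourages for $S$ is a family of such congruences such that every open congruence on $S$ contains one of them. The projective limit is taken over $\widehat{\mathscr F}$ ordered by inclusion, with the natural quotient maps, and the isomorphism is induced by the canonical maps $\operatorname{End} S\to \operatorname{End} S/\widehat\rho$. *)

theory Defs
  imports "HOL-Analysis.Analysis"
begin

definition topsemigroup :: "'a topology \<Rightarrow> ('a \<Rightarrow> 'a \<Rightarrow> 'a) \<Rightarrow> bool" where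
  "topsemigroup T m \<longleftrightarrow>
     (\<forall>x\<in>topspace T. \<forall>y\<in>topspace T. m x y \<in> topspace T) \<and>
     (\<forall>x\<in>topspace T. \<forall>y\<in>topspace T. \<forall>z\<in>topspace T. m (m x y) z = m x (m y z)) \<and>
     continuous_map (prod_topology T T) T (\<lambda>(x, y). m x y)"

definition congruence :: "'a set \<Rightarrow> ('a \<Rightarrow> 'a \<Rightarrow> 'a) \<Rightarrow> 'a rel \<Rightarrow> bool" where
  "congruence A m \<rho> \<longleftrightarrow> equiv A \<rho> \<and>
     (\<forall>(x, y)\<in>\<rho>. \<forall>z\<in>A. (m z x, m z y) \<in> \<rho> \<and> (m x z, m y z) \<in> \<rho>)"

definition open_congruence :: "'a topology \<Rightarrow> ('a \<Rightarrow> 'a \<Rightarrow> 'a) \<Rightarrow> 'a rel \<Rightarrow> bool" where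
  "open_congruence T m \<rho> \<longleftrightarrow> congruence (topspace T) m \<rho> \<and> openin (prod_topology T T) \<rho>"

text \<open>Profinite semigroup: compact Hausdorff topological semigroup which is residually
  finite, i.e. open congruences (which have finite index, by compactness) separate points.\<close>

definition profinite :: "'a topology \<Rightarrow> ('a \<Rightarrow> 'a \<Rightarrow> 'a) \<Rightarrow> bool" where
  "profinite T m \<longleftrightarrow> topsemigroup T m \<and> compact_space T \<and> Hausdorff_space T \<and>
     (\<forall>x\<in>topspace T. \<forall>y\<in>topspace T. x \<noteq> y \<longrightarrow>
        (\<exists>\<rho>. open_congruence T m \<rho> \<and> (x, y) \<notin> \<rho>))"

definition endo :: "'a topology \<Rightarrow> ('a \<Rightarrow> 'a \<Rightarrow> 'a) \<Rightarrow> ('a \<Rightarrow> 'a) set" where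
  "endo T m = {f. continuous_map T T f \<and> f \<in> extensional (topspace T) \<and>
      (\<forall>x\<in>topspace T. \<forall>y\<in>topspace T. f (m x y) = m (f x) (f y))}"

definition aut :: "'a topology \<Rightarrow> ('a \<Rightarrow> 'a \<Rightarrow> 'a) \<Rightarrow> ('a \<Rightarrow> 'a) set" where
  "aut T m = {f \<in> endo T m. homeomorphic_map T T f}"

definition compact_open :: "'a topology \<Rightarrow> ('a \<Rightarrow> 'a) set \<Rightarrow> ('a \<Rightarrow> 'a) topology" where
  "compact_open T E = subtopology
     (topology_generated_by {{f. f ` K \<subseteq> U} | K U. compactin T K \<and> openin T U}) E"

definition comp_op :: "'a topology \<Rightarrow> ('a \<Rightarrow> 'a) \<Rightarrow> ('a \<Rightarrow> 'a) \<Rightarrow> ('a \<Rightarrow> 'a)" where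
  "comp_op T f g = compose (topspace T) f g"

definition fully_invariant :: "'a topology \<Rightarrow> ('a \<Rightarrow> 'a \<Rightarrow> 'a) \<Rightarrow> 'a rel \<Rightarrow> bool" where
  "fully_invariant T m \<rho> \<longleftrightarrow> (\<forall>f\<in>endo T m. \<forall>(x, y)\<in>\<rho>. (f x, f y) \<in> \<rho>)"

definition characteristic :: "'a topology \<Rightarrow> ('a \<Rightarrow> 'a \<Rightarrow> 'a) \<Rightarrow> 'a rel \<Rightarrow> bool" where
  "characteristic T m \<rho> \<longleftrightarrow> (\<forall>f\<in>aut T m. \<forall>(x, y)\<in>\<rho>. (f x, f y) \<in> \<rho>)"

definition fundamental_system :: "'a topology \<Rightarrow> ('a \<Rightarrow> 'a \<Rightarrow> 'a) \<Rightarrow> 'a rel set \<Rightarrow> bool" where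
  "fundamental_system T m \<F> \<longleftrightarrow> (\<forall>\<rho>\<in>\<F>. open_congruence T m \<rho>) \<and>
     (\<forall>\<sigma>. open_congruence T m \<sigma> \<longrightarrow> (\<exists>\<rho>\<in>\<F>. \<rho> \<subseteq> \<sigma>))"

definition quot_top :: "'a topology \<Rightarrow> 'a rel \<Rightarrow> 'a set topology" where
  "quot_top T \<rho> = topology (\<lambda>U. U \<subseteq> topspace T // \<rho> \<and> openin T (\<Union>U))"

definition qmult :: "'a rel \<Rightarrow> ('a \<Rightarrow> 'a \<Rightarrow> 'a) \<Rightarrow> 'a set \<Rightarrow> 'a set \<Rightarrow> 'a set" where
  "qmult \<rho> m A B = \<rho> `` {m (SOME a. a \<in> A) (SOME b. b \<in> B)}"

definition r_map :: "'a topology \<Rightarrow> 'a rel \<Rightarrow> ('a \<Rightarrow> 'a) \<Rightarrow> ('a set \<Rightarrow> 'a set)" where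
  "r_map T \<rho> f = (\<lambda>C\<in>topspace T // \<rho>. \<rho> `` {f (SOME s. s \<in> C)})"

definition hatrel :: "'a topology \<Rightarrow> 'a rel \<Rightarrow> ('a \<Rightarrow> 'a) set \<Rightarrow> ('a \<Rightarrow> 'a) rel" where
  "hatrel T \<rho> E = {(f, g). f \<in> E \<and> g \<in> E \<and> r_map T \<rho> f = r_map T \<rho> g}"

text \<open>Projective limit of the quotients E / R, R ranging over a family H ordered by
  inclusion, with the natural maps E/R1 \<rightarrow> E/R2 (for R1 \<subseteq> R2), and its topology
  (subspace of the product of the quotient spaces).\<close>

definition projlim :: "('b \<Rightarrow> 'b) set \<Rightarrow> ('b \<Rightarrow> 'b) rel set \<Rightarrow> (('b \<Rightarrow> 'b) rel \<Rightarrow> ('b \<Rightarrow> 'b) set) set" where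
  "projlim E H = {x \<in> (\<Pi>\<^sub>E R\<in>H. E // R).
      \<forall>R1\<in>H. \<forall>R2\<in>H. R1 \<subseteq> R2 \<longrightarrow> R2 `` (x R1) = x R2}"

definition projlim_top :: "('b \<Rightarrow> 'b) topology \<Rightarrow> ('b \<Rightarrow> 'b) rel set
    \<Rightarrow> (('b \<Rightarrow> 'b) rel \<Rightarrow> ('b \<Rightarrow> 'b) set) topology" where
  "projlim_top C H = subtopology (product_topology (\<lambda>R. quot_top C R) H) (projlim (topspace C) H)"

definition canon :: "('b \<Rightarrow> 'b) rel set \<Rightarrow> ('b \<Rightarrow> 'b) \<Rightarrow> (('b \<Rightarrow> 'b) rel \<Rightarrow> ('b \<Rightarrow> 'b) set)" where
  "canon H f = (\<lambda>R\<in>H. R `` {f})"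

text \<open>The full conclusion, for E = End S (resp. Aut S) and Eq rho = End(S/rho)
  (resp. Aut(S/rho)): each r_rho maps E into Eq rho continuously (compact-open topologies),
  its kernel is an open congruence on the monoid E, and the canonical map is an isomorphism
  of topological monoids from E onto the projective limit of the E / kernel.\<close>

definition projlim_conclusion :: "'a topology \<Rightarrow> 'a rel set \<Rightarrow> ('a \<Rightarrow> 'a) set
    \<Rightarrow> ('a rel \<Rightarrow> ('a set \<Rightarrow> 'a set) set) \<Rightarrow> bool" where
  "projlim_conclusion T \<F> E Eq \<longleftrightarrow>
    (\<forall>\<rho>\<in>\<F>. continuous_map (compact_open T E) (compact_open (quot_top T \<rho>) (Eq \<rho>)) (r_map T \<rho>)
       \<and> open_congruence (compact_open T E) (comp_op T) (hatrel T \<rho> E)) \<and>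
    (let H = (\<lambda>\<rho>. hatrel T \<rho> E) ` \<F>; C = compact_open T E in
       bij_betw (canon H) E (projlim E H) \<and>
       homeomorphic_map C (projlim_top C H) (canon H) \<and>
       (\<forall>f\<in>E. \<forall>g\<in>E. canon H (comp_op T f g) =
            (\<lambda>R\<in>H. qmult R (comp_op T) (canon H f R) (canon H g R))) \<and>
       canon H (restrict id (topspace T)) = (\<lambda>R\<in>H. R `` {restrict id (topspace T)}))"

end

theory Submission
  imports Defs
begin

text \<open>An open congruence \<open>\<rho>\<close> on the compact space \<open>S\<close> has open, hence closed,
  classes, and only finitely many of them. Since \<open>\<F>\<close> is directed downwards and separates
  points, compactness gives two facts: every compact \<open>K\<close> inside an open \<open>U\<close> satisfies
  \<open>\<rho> `` K \<subseteq> U\<close> for some \<open>\<rho> \<in> \<F>\<close>, and every family of points \<open>p \<rho>\<close>,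
  \<open>\<rho> \<in> \<F>\<close>, that is coherent under refinement has a limit.

  Invariance of \<open>\<rho>\<close> lets each map act on \<open>S/\<rho>\<close>, and two maps lie in the kernel of
  \<open>r_map T \<rho>\<close> iff they agree modulo \<open>\<rho>\<close> at every point. By the first fact the classes of
  these kernels form a basis of the compact-open topology: such a class is a finite
  intersection of subbasic sets \<open>{g. g ` C \<subseteq> U}\<close> with \<open>C\<close>, \<open>U\<close> classes of \<open>\<rho>\<close>, and
  every subbasic neighbourhood of \<open>f\<close> contains the class of \<open>f\<close> for a suitable \<open>\<rho>\<close>.
  Hence the canonical map into the projective limit is continuous and open, and it is
  injective because \<open>\<F>\<close> separates points. A point of the projective limit is represented
  by a coherent family of maps \<open>g \<rho>\<close>; by the second fact they converge pointwise to a map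
  \<open>f\<close>, which is again a continuous endomorphism, and for automorphisms the limit of the
  inverses of the \<open>g \<rho>\<close> is the inverse of \<open>f\<close>.\<close>

section \<open>Congruences with open classes\<close>

lemma openin_Image_singleton:
  assumes "openin (prod_topology X Y) R"
  shows "openin Y (R `` {x})"
proof (cases "x \<in> topspace X")
  case True
  then have "continuous_map Y (prod_topology X Y) (\<lambda>y. (x, y))"
    by (simp add: continuous_map_pairwise o_def)
  from openin_continuous_map_preimage[OF this assms]
  have "openin Y {y \<in> topspace Y. (x, y) \<in> R}" .
  moreover have "{y \<in> topspace Y. (x, y) \<in> R} = R `` {x}"
    using openin_subset[OF assms] by auto
  ultimately show ?thesis by simp
next
  case False
  then have "R `` {x} = {}" using openin_subset[OF assms] by auto
  then show ?thesis by simp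
qed

lemma openin_equiv_class:
  "open_congruence X m R \<Longrightarrow> openin X (R `` {x})"
  unfolding open_congruence_def by (blast intro: openin_Image_singleton)

lemma closedin_equiv_class:
  assumes R: "equiv (topspace X) R" and classes: "\<And>x. openin X (R `` {x})"
  shows "closedin X (R `` {x})"
proof -
  have "topspace X - R `` {x} = (\<Union>y \<in> topspace X - R `` {x}. R `` {y})"
  proof
    show "topspace X - R `` {x} \<subseteq> (\<Union>y \<in> topspace X - R `` {x}. R `` {y})"
      using equiv_class_self[OF R] by blast
    show "(\<Union>y \<in> topspace X - R `` {x}. R `` {y}) \<subseteq> topspace X - R `` {x}"
    proof
      fix z assume "z \<in> (\<Union>y \<in> topspace X - R `` {x}. R `` {y})"
      then obtain y where y: "y \<notin> R `` {x}" and z: "(y, z) \<in> R" by blast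
      then have "z \<notin> R `` {x}" using equiv_class_nondisjoint[OF R, of z x y] by blast
      moreover have "z \<in> topspace X" using z equiv_type[OF R] by blast
      ultimately show "z \<in> topspace X - R `` {x}" by blast
    qed
  qed
  moreover have "openin X (\<Union>y \<in> topspace X - R `` {x}. R `` {y})"
    using classes by blast
  moreover have "R `` {x} \<subseteq> topspace X" using equiv_type[OF R] by blast
  ultimately show ?thesis by (simp add: closedin_def)
qed

lemma finite_quotient_open_classes:
  assumes X: "compact_space X" and R: "equiv (topspace X) R"
    and classes: "\<And>x. openin X (R `` {x})"
  shows "finite (topspace X // R)"
proof -
  have "\<forall>U \<in> topspace X // R. openin X U" using classes by (auto elim: quotientE)
  moreover have "topspace X \<subseteq> \<Union>(topspace X // R)" using Union_quotient[OF R] by simp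
  ultimately obtain \<V> where \<V>: "finite \<V>" "\<V> \<subseteq> topspace X // R" "topspace X \<subseteq> \<Union>\<V>"
    using X unfolding compact_space_alt by meson
  have "topspace X // R \<subseteq> \<V>"
  proof
    fix U assume U: "U \<in> topspace X // R"
    then obtain x where "x \<in> U" using in_quotient_imp_non_empty[OF R] by blast
    moreover from this obtain V where "V \<in> \<V>" "x \<in> V"
      using U \<V>(3) in_quotient_imp_subset[OF R] by blast
    ultimately show "U \<in> \<V>" using quotient_disj[OF R U] \<V>(2) by blast
  qed
  then show ?thesis using \<V>(1) finite_subset by blast
qed

lemma openin_equiv_open_classes:
  assumes R: "equiv (topspace X) R" and classes: "\<And>x. openin X (R `` {x})"
  shows "openin (prod_topology X X) R"
proof -
  have "R = (\<Union>x\<in>topspace X. R `` {x} \<times> R `` {x})"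
  proof
    show "R \<subseteq> (\<Union>x\<in>topspace X. R `` {x} \<times> R `` {x})"
      using equiv_type[OF R] equiv_class_self[OF R] by blast
    show "(\<Union>x\<in>topspace X. R `` {x} \<times> R `` {x}) \<subseteq> R"
      using in_quotient_imp_in_rel[OF R quotientI] by blast
  qed
  moreover have "openin (prod_topology X X) (\<Union>x\<in>topspace X. R `` {x} \<times> R `` {x})"
    using classes by (intro openin_Union) (auto simp: openin_prod_Times_iff)
  ultimately show ?thesis by simp
qed

lemma congruence_mult:
  assumes \<rho>: "congruence A m \<rho>" and a: "(a, a') \<in> \<rho>" and b: "(b, b') \<in> \<rho>"
  shows "(m a b, m a' b') \<in> \<rho>"
proof -
  have e: "equiv A \<rho>" using \<rho> unfolding congruence_def by blast
  have "b \<in> A" "a' \<in> A" using a b equiv_type[OF e] by blast+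
  then have "(m a b, m a' b) \<in> \<rho>" "(m a' b, m a' b') \<in> \<rho>"
    using \<rho> a b unfolding congruence_def by blast+
  then show ?thesis using e unfolding equiv_def by (blast dest: transD)
qed

lemma qmult_classes:
  assumes \<rho>: "congruence A m \<rho>" and x: "x \<in> A" and y: "y \<in> A"
  shows "qmult \<rho> m (\<rho> `` {x}) (\<rho> `` {y}) = \<rho> `` {m x y}"
proof -
  have e: "equiv A \<rho>" using \<rho> unfolding congruence_def by blast
  define a b where "a = (SOME a. a \<in> \<rho> `` {x})" and "b = (SOME b. b \<in> \<rho> `` {y})"
  have "a \<in> \<rho> `` {x}" "b \<in> \<rho> `` {y}"
    unfolding a_def b_def using equiv_class_self[OF e] x y by (metis someI)+
  then have "(m x y, m a b) \<in> \<rho>" using congruence_mult[OF \<rho>] by blast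
  then show ?thesis unfolding qmult_def a_def[symmetric] b_def[symmetric]
    using equiv_class_eq[OF e] by metis
qed

lemma equiv_Int: "equiv A r \<Longrightarrow> equiv A s \<Longrightarrow> equiv A (r \<inter> s)"
  using refl_on_Int[of A r A s] sym_Int[of r s] trans_Int[of r s] by (auto simp: equiv_def)

lemma open_congruence_Int:
  assumes "open_congruence T m \<rho>" "open_congruence T m \<sigma>"
  shows "open_congruence T m (\<rho> \<inter> \<sigma>)"
  using assms equiv_Int unfolding open_congruence_def congruence_def by (auto simp: openin_Int)

lemma open_congruence_topspace:
  assumes "topsemigroup T m"
  shows "open_congruence T m (topspace T \<times> topspace T)"
proof -
  have "equiv (topspace T) (topspace T \<times> topspace T)"
    by (simp add: equiv_def refl_on_def sym_def trans_def)
  moreover have "openin (prod_topology T T) (topspace T \<times> topspace T)"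
    by (metis openin_topspace topspace_prod_topology)
  ultimately show ?thesis
    using assms unfolding open_congruence_def congruence_def topsemigroup_def by blast
qed

lemma quotient_eq_class:
  assumes "equiv A R" "D \<in> A // R" "x \<in> D"
  shows "D = R `` {x}"
  using assms by (metis Image_singleton_iff equiv_class_eq quotientE)

lemma istopology_quot_top:
  assumes R: "equiv (topspace X) R"
  shows "istopology (\<lambda>U. U \<subseteq> topspace X // R \<and> openin X (\<Union>U))"
  unfolding istopology_def
proof (rule conjI; intro allI impI)
  fix U V assume U: "U \<subseteq> topspace X // R \<and> openin X (\<Union>U)"
    and V: "V \<subseteq> topspace X // R \<and> openin X (\<Union>V)"
  have "\<Union>(U \<inter> V) = \<Union>U \<inter> \<Union>V"
    using U V quotient_disj[OF R] by blast
  moreover have "openin X (\<Union>U \<inter> \<Union>V)" using U V by (intro openin_Int) blast+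
  ultimately show "U \<inter> V \<subseteq> topspace X // R \<and> openin X (\<Union>(U \<inter> V))"
    using U by auto
next
  fix \<K> assume \<K>: "\<forall>U\<in>\<K>. U \<subseteq> topspace X // R \<and> openin X (\<Union>U)"
  have "\<Union>(\<Union>\<K>) = \<Union>(Union ` \<K>)" by blast
  moreover have "openin X (\<Union>(Union ` \<K>))" using \<K> by blast
  ultimately show "\<Union>\<K> \<subseteq> topspace X // R \<and> openin X (\<Union>(\<Union>\<K>))" using \<K> by auto
qed

lemma openin_quot_top:
  assumes "equiv (topspace X) R"
  shows "openin (quot_top X R) U \<longleftrightarrow> U \<subseteq> topspace X // R \<and> openin X (\<Union>U)"
  unfolding quot_top_def using topology_inverse'[OF istopology_quot_top[OF assms]] by simp

lemma topspace_quot_top: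
  assumes R: "equiv (topspace X) R"
  shows "topspace (quot_top X R) = topspace X // R"
proof -
  have "openin (quot_top X R) (topspace X // R)"
    using openin_quot_top[OF R] Union_quotient[OF R] by simp
  then have "topspace X // R \<subseteq> topspace (quot_top X R)" by (rule openin_subset)
  moreover have "topspace (quot_top X R) \<subseteq> topspace X // R"
    unfolding topspace_def openin_quot_top[OF R] by blast
  ultimately show ?thesis by blast
qed

section \<open>The compact-open topology\<close>

definition compact_open_subbasis :: "'a topology \<Rightarrow> ('a \<Rightarrow> 'a) set set" where
  "compact_open_subbasis T = {{f. f ` K \<subseteq> U} | K U. compactin T K \<and> openin T U}"

lemma compact_open_generated:
  "compact_open T E = subtopology (topology_generated_by (compact_open_subbasis T)) E"
  unfolding compact_open_def compact_open_subbasis_def by simp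

lemma UNIV_in_compact_open_subbasis: "UNIV \<in> compact_open_subbasis T"
proof -
  have "UNIV = {f. f ` {} \<subseteq> ({} :: 'a set)}" by simp
  then show ?thesis unfolding compact_open_subbasis_def by blast
qed

lemma topspace_compact_open: "topspace (compact_open T E) = E"
proof -
  have "\<Union>(compact_open_subbasis T) = UNIV" using UNIV_in_compact_open_subbasis by blast
  then show ?thesis unfolding compact_open_generated by simp
qed

lemma r_map_class:
  assumes R: "equiv (topspace T) R" and f: "\<And>x y. (x, y) \<in> R \<Longrightarrow> (f x, f y) \<in> R"
    and s: "s \<in> topspace T"
  shows "r_map T R f (R `` {s}) = R `` {f s}"
proof -
  have "s \<in> R `` {s}" using equiv_class_self[OF R s] .
  then have "(s, SOME c. c \<in> R `` {s}) \<in> R" by (metis Image_singleton_iff someI)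
  then have "R `` {f (SOME c. c \<in> R `` {s})} = R `` {f s}"
    using f equiv_class_eq[OF R] by metis
  then show ?thesis using s unfolding r_map_def by (simp add: quotientI)
qed

lemma continuous_map_r_map:
  assumes R: "equiv (topspace T) R" and f_resp: "\<And>x y. (x, y) \<in> R \<Longrightarrow> (f x, f y) \<in> R"
    and f: "continuous_map T T f"
  shows "continuous_map (quot_top T R) (quot_top T R) (r_map T R f)"
  unfolding continuous_map_def topspace_quot_top[OF R]
proof (intro conjI allI impI)
  have maps: "\<And>x. x \<in> topspace T \<Longrightarrow> f x \<in> topspace T"
    using f by (simp add: continuous_map_def Pi_iff)
  show "r_map T R f \<in> topspace T // R \<rightarrow> topspace T // R"
  proof
    fix C assume "C \<in> topspace T // R"
    then obtain s where "s \<in> topspace T" "C = R `` {s}" by (auto elim: quotientE)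
    then show "r_map T R f C \<in> topspace T // R"
      using r_map_class[OF R f_resp] maps by (simp add: quotientI)
  qed
  fix U assume "openin (quot_top T R) U"
  then have U: "U \<subseteq> topspace T // R" "openin T (\<Union>U)" using openin_quot_top[OF R] by blast+
  have "\<Union>{C \<in> topspace T // R. r_map T R f C \<in> U} = {s \<in> topspace T. f s \<in> \<Union>U}"
  proof
    show "\<Union>{C \<in> topspace T // R. r_map T R f C \<in> U} \<subseteq> {s \<in> topspace T. f s \<in> \<Union>U}"
    proof
      fix s assume "s \<in> \<Union>{C \<in> topspace T // R. r_map T R f C \<in> U}"
      then obtain C where C: "C \<in> topspace T // R" "r_map T R f C \<in> U" and s: "s \<in> C" by blast
      have sT: "s \<in> topspace T" using in_quotient_imp_subset[OF R C(1)] s by blast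
      then have "R `` {f s} \<in> U"
        using C r_map_class[OF R f_resp] quotient_eq_class[OF R C(1) s] by simp
      moreover have "f s \<in> R `` {f s}" using equiv_class_self[OF R maps[OF sT]] .
      ultimately show "s \<in> {s \<in> topspace T. f s \<in> \<Union>U}" using sT by blast
    qed
    show "{s \<in> topspace T. f s \<in> \<Union>U} \<subseteq> \<Union>{C \<in> topspace T // R. r_map T R f C \<in> U}"
    proof clarify
      fix s D assume s: "s \<in> topspace T" and D: "D \<in> U" "f s \<in> D"
      have "R `` {f s} \<in> U" using quotient_eq_class[OF R _ D(2)] D(1) U(1) by auto
      then have "r_map T R f (R `` {s}) \<in> U" using r_map_class[OF R f_resp s] by simp
      moreover have "s \<in> R `` {s}" using equiv_class_self[OF R s] .
      ultimately show "s \<in> \<Union>{C \<in> topspace T // R. r_map T R f C \<in> U}"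
        using s by (blast intro: quotientI)
    qed
  qed
  moreover have "openin T {s \<in> topspace T. f s \<in> \<Union>U}"
    using openin_continuous_map_preimage[OF f U(2)] .
  ultimately show "openin (quot_top T R) {C \<in> topspace T // R. r_map T R f C \<in> U}"
    unfolding openin_quot_top[OF R] by simp
qed

lemma topsemigroup_closed:
  "topsemigroup T m \<Longrightarrow> x \<in> topspace T \<Longrightarrow> y \<in> topspace T \<Longrightarrow> m x y \<in> topspace T"
  by (simp add: topsemigroup_def)

lemma endo_maps: "f \<in> endo T m \<Longrightarrow> x \<in> topspace T \<Longrightarrow> f x \<in> topspace T"
  unfolding endo_def continuous_map_def by blast

lemma r_map_in_endo:
  assumes m: "topsemigroup T m" and R: "congruence (topspace T) m R"
    and f: "f \<in> endo T m" and f_resp: "\<And>x y. (x, y) \<in> R \<Longrightarrow> (f x, f y) \<in> R"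
  shows "r_map T R f \<in> endo (quot_top T R) (qmult R m)"
proof -
  have e: "equiv (topspace T) R" using R unfolding congruence_def by blast
  have hom: "r_map T R f (qmult R m A B) = qmult R m (r_map T R f A) (r_map T R f B)"
    if A: "A \<in> topspace T // R" and B: "B \<in> topspace T // R" for A B
  proof -
    obtain a where a: "a \<in> topspace T" "A = R `` {a}" using A by (auto elim: quotientE)
    obtain b where b: "b \<in> topspace T" "B = R `` {b}" using B by (auto elim: quotientE)
    note ab = a(1) b(1) a(2) b(2)
    have mab: "m a b \<in> topspace T" using topsemigroup_closed[OF m] ab by blast
    have "r_map T R f (qmult R m A B) = R `` {f (m a b)}"
      using qmult_classes[OF R] r_map_class[OF e f_resp] ab mab by simp
    also have "\<dots> = R `` {m (f a) (f b)}" using f ab unfolding endo_def by simp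
    also have "\<dots> = qmult R m (r_map T R f A) (r_map T R f B)"
      using qmult_classes[OF R] r_map_class[OF e f_resp] endo_maps[OF f] ab by simp
    finally show ?thesis .
  qed
  have "continuous_map (quot_top T R) (quot_top T R) (r_map T R f)"
    using f continuous_map_r_map[where f = f, OF e f_resp] by (simp add: endo_def)
  moreover have "r_map T R f \<in> extensional (topspace (quot_top T R))"
    unfolding topspace_quot_top[OF e] r_map_def by simp
  ultimately show ?thesis using hom unfolding endo_def topspace_quot_top[OF e] by blast
qed

lemma r_map_in_aut:
  assumes m: "topsemigroup T m" and R: "congruence (topspace T) m R"
    and f: "f \<in> endo T m" and f_resp: "\<And>x y. (x, y) \<in> R \<Longrightarrow> (f x, f y) \<in> R"
    and g: "g \<in> endo T m" and g_resp: "\<And>x y. (x, y) \<in> R \<Longrightarrow> (g x, g y) \<in> R"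
    and gf: "\<And>x. x \<in> topspace T \<Longrightarrow> g (f x) = x"
    and fg: "\<And>x. x \<in> topspace T \<Longrightarrow> f (g x) = x"
  shows "r_map T R f \<in> aut (quot_top T R) (qmult R m)"
proof -
  have e: "equiv (topspace T) R" using R unfolding congruence_def by blast
  have rf: "r_map T R f \<in> endo (quot_top T R) (qmult R m)" by (rule r_map_in_endo[OF m R f f_resp])
  have rg: "r_map T R g \<in> endo (quot_top T R) (qmult R m)" by (rule r_map_in_endo[OF m R g g_resp])
  have "homeomorphic_maps (quot_top T R) (quot_top T R) (r_map T R f) (r_map T R g)"
    unfolding homeomorphic_maps_def topspace_quot_top[OF e]
  proof (intro conjI ballI)
    show "continuous_map (quot_top T R) (quot_top T R) (r_map T R f)"
      "continuous_map (quot_top T R) (quot_top T R) (r_map T R g)"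
      using rf rg unfolding endo_def by blast+
  next
    fix C assume "C \<in> topspace T // R"
    then obtain s where s: "s \<in> topspace T" "C = R `` {s}" by (auto elim: quotientE)
    show "r_map T R g (r_map T R f C) = C"
      using r_map_class[OF e f_resp s(1)] r_map_class[OF e g_resp endo_maps[OF f s(1)]] gf s
      by simp
    show "r_map T R f (r_map T R g C) = C"
      using r_map_class[OF e g_resp s(1)] r_map_class[OF e f_resp endo_maps[OF g s(1)]] fg s
      by simp
  qed
  then show ?thesis using rf homeomorphic_maps_imp_map unfolding aut_def by blast
qed

lemma comp_op_apply: "x \<in> topspace T \<Longrightarrow> comp_op T f g x = f (g x)"
  unfolding comp_op_def compose_def by simp

lemma comp_op_in_endo:
  assumes m: "topsemigroup T m" and f: "f \<in> endo T m" and g: "g \<in> endo T m"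
  shows "comp_op T f g \<in> endo T m"
proof -
  have "continuous_map T T (f \<circ> g)"
    using f g unfolding endo_def by (blast intro: continuous_map_compose)
  then have "continuous_map T T (comp_op T f g)"
    by (rule continuous_map_eq) (simp add: comp_op_apply)
  moreover have "comp_op T f g \<in> extensional (topspace T)" unfolding comp_op_def by simp
  moreover have "comp_op T f g (m x y) = m (comp_op T f g x) (comp_op T f g y)"
    if "x \<in> topspace T" "y \<in> topspace T" for x y
    using that topsemigroup_closed[OF m] f g endo_maps[OF g] unfolding endo_def
    by (simp add: comp_op_apply)
  ultimately show ?thesis unfolding endo_def by blast
qed

lemma comp_op_in_aut:
  assumes m: "topsemigroup T m" and f: "f \<in> aut T m" and g: "g \<in> aut T m"
  shows "comp_op T f g \<in> aut T m"
proof -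
  have "homeomorphic_map T T (f \<circ> g)"
    using f g unfolding aut_def by (blast intro: homeomorphic_map_compose)
  then have "homeomorphic_map T T (comp_op T f g)"
    by (rule homeomorphic_map_eq) (simp add: comp_op_apply)
  then show ?thesis using comp_op_in_endo[OF m] f g unfolding aut_def by blast
qed

lemma aut_inverse:
  assumes m: "topsemigroup T m" and f: "f \<in> aut T m"
  obtains g where "g \<in> aut T m" "\<And>x. x \<in> topspace T \<Longrightarrow> g (f x) = x"
    "\<And>x. x \<in> topspace T \<Longrightarrow> f (g x) = x"
proof -
  obtain g' where g': "homeomorphic_maps T T f g'"
    using f homeomorphic_map_maps unfolding aut_def by blast
  define g where "g = restrict g' (topspace T)"
  have g'_maps: "homeomorphic_map T T g'" "\<And>x. x \<in> topspace T \<Longrightarrow> g' (f x) = x"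
    "\<And>x. x \<in> topspace T \<Longrightarrow> f (g' x) = x"
    using g' unfolding homeomorphic_maps_map by blast+
  have hg: "homeomorphic_map T T g"
    using g'_maps(1) by (rule homeomorphic_map_eq) (simp add: g_def)
  have gT: "g x \<in> topspace T" if "x \<in> topspace T" for x
    using hg that unfolding homeomorphic_eq_everything_map by blast
  have fT: "f x \<in> topspace T" if "x \<in> topspace T" for x
    using f that by (auto simp: aut_def endo_maps)
  have gf: "g (f x) = x" and fg: "f (g x) = x" if "x \<in> topspace T" for x
    using that fT g'_maps(2,3) unfolding g_def by simp_all
  have hom: "g (m x y) = m (g x) (g y)" if xy: "x \<in> topspace T" "y \<in> topspace T" for x y
  proof -
    have "f (m (g x) (g y)) = m x y"
      using f gT xy fg unfolding aut_def endo_def by simp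
    then have "g (m x y) = g (f (m (g x) (g y)))" by simp
    also have "\<dots> = m (g x) (g y)" using gf topsemigroup_closed[OF m] gT xy by blast
    finally show ?thesis .
  qed
  have "g \<in> aut T m"
    using hg hom homeomorphic_imp_continuous_map[OF hg] unfolding aut_def endo_def g_def by simp
  then show ?thesis using that gf fg by blast
qed

section \<open>Fundamental systems of a profinite semigroup\<close>

locale profinite_system =
  fixes T :: "'a topology" and m :: "'a \<Rightarrow> 'a \<Rightarrow> 'a" and \<F> :: "'a rel set"
  assumes profinite: "profinite T m" and fundamental: "fundamental_system T m \<F>"
begin

abbreviation "S \<equiv> topspace T"

lemma topsemigroup: "topsemigroup T m"
  using profinite by (simp add: profinite_def)

lemma compact: "compact_space T"
  using profinite by (simp add: profinite_def)

lemma separation: "x \<in> S \<Longrightarrow> y \<in> S \<Longrightarrow> x \<noteq> y \<Longrightarrow> \<exists>\<sigma>. open_congruence T m \<sigma> \<and> (x, y) \<notin> \<sigma>"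
  using profinite unfolding profinite_def by blast

lemma open_congruence_F: "\<rho> \<in> \<F> \<Longrightarrow> open_congruence T m \<rho>"
  using fundamental by (simp add: fundamental_system_def)

lemma F_refines: "open_congruence T m \<sigma> \<Longrightarrow> \<exists>\<rho>\<in>\<F>. \<rho> \<subseteq> \<sigma>"
  using fundamental by (simp add: fundamental_system_def)

lemma congruence_F: "\<rho> \<in> \<F> \<Longrightarrow> congruence S m \<rho>"
  using open_congruence_F by (simp add: open_congruence_def)

lemma equiv_F: "\<rho> \<in> \<F> \<Longrightarrow> equiv S \<rho>"
  using congruence_F by (simp add: congruence_def)

lemma F_symD: "\<rho> \<in> \<F> \<Longrightarrow> (x, y) \<in> \<rho> \<Longrightarrow> (y, x) \<in> \<rho>"
  using equiv_F[of \<rho>] unfolding equiv_def by (blast dest: symD)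

lemma F_transD: "\<rho> \<in> \<F> \<Longrightarrow> (x, y) \<in> \<rho> \<Longrightarrow> (y, z) \<in> \<rho> \<Longrightarrow> (x, z) \<in> \<rho>"
  using equiv_F[of \<rho>] unfolding equiv_def by (blast dest: transD)

lemma openin_class_F: "\<rho> \<in> \<F> \<Longrightarrow> openin T (\<rho> `` {x})"
  by (rule openin_equiv_class[OF open_congruence_F])

lemma F_finite_lower_bound: "finite A \<Longrightarrow> A \<subseteq> \<F> \<Longrightarrow> \<exists>\<rho>\<in>\<F>. \<forall>\<alpha>\<in>A. \<rho> \<subseteq> \<alpha>"
proof (induction A rule: finite_induct)
  case empty
  show ?case using F_refines[OF open_congruence_topspace[OF topsemigroup]] by blast
next
  case (insert \<alpha> A)
  then obtain \<rho> where \<rho>: "\<rho> \<in> \<F>" "\<forall>\<beta>\<in>A. \<rho> \<subseteq> \<beta>" by blast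
  have "open_congruence T m (\<rho> \<inter> \<alpha>)"
    using open_congruence_Int open_congruence_F \<rho>(1) insert.prems by blast
  then obtain \<rho>' where "\<rho>' \<in> \<F>" "\<rho>' \<subseteq> \<rho> \<inter> \<alpha>" using F_refines by blast
  then show ?case using \<rho> by blast
qed

lemma F_separates:
  assumes "x \<in> S" "y \<in> S" "\<And>\<rho>. \<rho> \<in> \<F> \<Longrightarrow> (x, y) \<in> \<rho>"
  shows "x = y"
  using separation[OF assms(1,2)] F_refines assms(3) by blast

lemma compact_covered_by_classes:
  assumes K: "compactin T K" and r: "\<And>z. z \<in> K \<Longrightarrow> r z \<in> \<F>"
  obtains K0 \<rho> where "finite K0" "K0 \<subseteq> K" "K \<subseteq> (\<Union>z\<in>K0. r z `` {z})"
    "\<rho> \<in> \<F>" "\<And>z. z \<in> K0 \<Longrightarrow> \<rho> \<subseteq> r z"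
proof -
  have "K \<subseteq> (\<Union>z\<in>K. r z `` {z})"
    using r equiv_class_self[OF equiv_F] compactin_subset_topspace[OF K] by blast
  moreover have "\<forall>V \<in> (\<lambda>z. r z `` {z}) ` K. openin T V" using r openin_class_F by blast
  ultimately obtain \<V> where "finite \<V>" "\<V> \<subseteq> (\<lambda>z. r z `` {z}) ` K" "K \<subseteq> \<Union>\<V>"
    using K unfolding compactin_def by meson
  then obtain K0 where K0: "K0 \<subseteq> K" "finite K0" "K \<subseteq> (\<Union>z\<in>K0. r z `` {z})"
    using finite_subset_image[of \<V> "\<lambda>z. r z `` {z}" K] by blast
  moreover obtain \<rho> where "\<rho> \<in> \<F>" "\<forall>\<alpha> \<in> r ` K0. \<rho> \<subseteq> \<alpha>"
    using F_finite_lower_bound[of "r ` K0"] K0 r by blast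
  ultimately show ?thesis using that by blast
qed

lemma class_subset_open:
  assumes U: "openin T U" and y: "y \<in> U"
  obtains \<rho> where "\<rho> \<in> \<F>" "\<rho> `` {y} \<subseteq> U"
proof -
  have yS: "y \<in> S" using U y openin_subset by blast
  have K: "compactin T (S - U)"
    using closedin_compact_space[OF compact] U by (simp add: closedin_diff)
  have "\<exists>r. r \<in> \<F> \<and> (y, z) \<notin> r" if z: "z \<in> S - U" for z
  proof -
    obtain \<sigma> where "open_congruence T m \<sigma>" "(y, z) \<notin> \<sigma>"
      using separation[OF yS] z y by blast
    then show ?thesis using F_refines by blast
  qed
  then obtain r where r: "\<And>z. z \<in> S - U \<Longrightarrow> r z \<in> \<F> \<and> (y, z) \<notin> r z"
    using bchoice[of "S - U" "\<lambda>z r. r \<in> \<F> \<and> (y, z) \<notin> r"] by blast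
  obtain K0 \<rho> where K0: "K0 \<subseteq> S - U" "S - U \<subseteq> (\<Union>z\<in>K0. r z `` {z})"
    and \<rho>: "\<rho> \<in> \<F>" "\<And>z. z \<in> K0 \<Longrightarrow> \<rho> \<subseteq> r z"
    by (rule compact_covered_by_classes[OF K, of r]) (use r in auto)
  have "\<rho> `` {y} \<subseteq> U"
  proof
    fix t assume t: "t \<in> \<rho> `` {y}"
    show "t \<in> U"
    proof (rule ccontr)
      assume "t \<notin> U"
      moreover have "t \<in> S" using t equiv_type[OF equiv_F[OF \<rho>(1)]] by blast
      ultimately obtain z where z: "z \<in> K0" "(z, t) \<in> r z" using K0(2) by blast
      moreover have "(y, t) \<in> r z" using t \<rho>(2)[OF z(1)] by blast
      ultimately have "(y, z) \<in> r z" using r K0(1) F_symD F_transD by blast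
      then show False using r K0(1) z(1) by blast
    qed
  qed
  then show ?thesis using that \<rho>(1) by blast
qed

lemma image_subset_open:
  assumes K: "compactin T K" and U: "openin T U" and KU: "K \<subseteq> U"
  obtains \<rho> where "\<rho> \<in> \<F>" "\<rho> `` K \<subseteq> U"
proof -
  have "\<forall>y \<in> K. \<exists>r. r \<in> \<F> \<and> r `` {y} \<subseteq> U"
  proof
    fix y assume "y \<in> K"
    then have "y \<in> U" using KU by blast
    then obtain r where "r \<in> \<F>" "r `` {y} \<subseteq> U" by (rule class_subset_open[OF U])
    then show "\<exists>r. r \<in> \<F> \<and> r `` {y} \<subseteq> U" by blast
  qed
  then obtain r where r: "\<forall>y \<in> K. r y \<in> \<F> \<and> r y `` {y} \<subseteq> U"
    by (rule bchoice[THEN exE])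
  obtain K0 \<rho> where K0: "K0 \<subseteq> K" "K \<subseteq> (\<Union>z\<in>K0. r z `` {z})"
    and \<rho>: "\<rho> \<in> \<F>" "\<And>z. z \<in> K0 \<Longrightarrow> \<rho> \<subseteq> r z"
    by (rule compact_covered_by_classes[OF K, of r]) (use r in auto)
  have "\<rho> `` K \<subseteq> U"
  proof
    fix t assume "t \<in> \<rho> `` K"
    then obtain k where k: "k \<in> K" "(k, t) \<in> \<rho>" by blast
    then obtain z where z: "z \<in> K0" "(z, k) \<in> r z" using K0(2) by blast
    have "(z, t) \<in> r z" using F_transD[OF _ z(2)] \<rho>(2)[OF z(1)] k(2) r K0(1) z(1) by blast
    then show "t \<in> U" using r K0(1) z(1) by blast
  qed
  then show ?thesis using that \<rho>(1) by blast
qed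

text \<open>The classes \<open>\<rho> `` {p \<rho>}\<close> are closed, and any finitely many of them contain the
  value of \<open>p\<close> at a common refinement; compactness yields a point in all of them.\<close>

lemma coherent_family_limit:
  assumes p: "\<And>\<rho>. \<rho> \<in> \<F> \<Longrightarrow> p \<rho> \<in> S"
    and coherent: "\<And>\<rho> \<sigma>. \<rho> \<in> \<F> \<Longrightarrow> \<sigma> \<in> \<F> \<Longrightarrow> \<sigma> \<subseteq> \<rho> \<Longrightarrow> (p \<sigma>, p \<rho>) \<in> \<rho>"
  obtains y where "y \<in> S" "\<And>\<rho>. \<rho> \<in> \<F> \<Longrightarrow> (y, p \<rho>) \<in> \<rho>"
proof -
  define \<U> where "\<U> = (\<lambda>\<rho>. \<rho> `` {p \<rho>}) ` \<F>"
  have closed: "\<forall>C\<in>\<U>. closedin T C"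
    unfolding \<U>_def using closedin_equiv_class[OF equiv_F openin_class_F] by blast
  have fip: "\<Inter>\<V> \<noteq> {}" if \<V>: "finite \<V>" "\<V> \<subseteq> \<U>" for \<V>
  proof -
    obtain A where A: "A \<subseteq> \<F>" "finite A" "\<V> = (\<lambda>\<rho>. \<rho> `` {p \<rho>}) ` A"
      using finite_subset_image[OF \<V>[unfolded \<U>_def]] by blast
    obtain \<sigma> where \<sigma>: "\<sigma> \<in> \<F>" "\<forall>\<alpha>\<in>A. \<sigma> \<subseteq> \<alpha>"
      using F_finite_lower_bound[OF A(2,1)] by blast
    have "p \<sigma> \<in> \<alpha> `` {p \<alpha>}" if "\<alpha> \<in> A" for \<alpha>
    proof -
      have "(p \<sigma>, p \<alpha>) \<in> \<alpha>" using coherent that \<sigma> A(1) by blast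
      then show ?thesis using F_symD that A(1) by blast
    qed
    then show ?thesis using A(3) by blast
  qed
  have "\<Inter>\<U> \<noteq> {}"
    by (rule compact[unfolded compact_space_fip, rule_format]) (use closed fip in blast)
  then obtain y where y: "y \<in> \<Inter>\<U>" by blast
  have y_rel: "(y, p \<rho>) \<in> \<rho>" if "\<rho> \<in> \<F>" for \<rho>
  proof -
    have "(p \<rho>, y) \<in> \<rho>" using y that unfolding \<U>_def by blast
    then show ?thesis using F_symD that by blast
  qed
  obtain \<rho> where "\<rho> \<in> \<F>" using F_refines[OF open_congruence_topspace[OF topsemigroup]] by blast
  then have "y \<in> S" using y_rel equiv_type[OF equiv_F] by blast
  then show ?thesis using that y_rel by blast
qed

definition coherent_family :: "('a rel \<Rightarrow> 'a \<Rightarrow> 'a) \<Rightarrow> bool" where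
  "coherent_family g \<longleftrightarrow> (\<forall>\<rho>\<in>\<F>. \<forall>\<sigma>\<in>\<F>. \<sigma> \<subseteq> \<rho> \<longrightarrow> (\<forall>s\<in>S. (g \<sigma> s, g \<rho> s) \<in> \<rho>))"

definition pointwise_limit :: "('a rel \<Rightarrow> 'a \<Rightarrow> 'a) \<Rightarrow> ('a \<Rightarrow> 'a) \<Rightarrow> bool" where
  "pointwise_limit g f \<longleftrightarrow> (\<forall>\<rho>\<in>\<F>. \<forall>s\<in>S. (f s, g \<rho> s) \<in> \<rho>)"

end

section \<open>Kernels of the induced maps\<close>

lemma equiv_hatrel: "equiv E (hatrel T \<rho> E)"
  unfolding hatrel_def equiv_def refl_on_def sym_def trans_def by auto

locale invariant_endomorphisms = profinite_system +
  fixes E :: "('a \<Rightarrow> 'a) set"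
  assumes E_endo: "E \<subseteq> endo T m"
    and comp_op_closed: "f \<in> E \<Longrightarrow> g \<in> E \<Longrightarrow> comp_op T f g \<in> E"
    and E_invariant: "\<rho> \<in> \<F> \<Longrightarrow> f \<in> E \<Longrightarrow> (x, y) \<in> \<rho> \<Longrightarrow> (f x, f y) \<in> \<rho>"
begin

abbreviation "CO \<equiv> compact_open T E"

abbreviation "\<H> \<equiv> (\<lambda>\<rho>. hatrel T \<rho> E) ` \<F>"

lemma E_maps: "f \<in> E \<Longrightarrow> x \<in> S \<Longrightarrow> f x \<in> S"
  using E_endo by (blast intro: endo_maps)

lemma r_map_class_E: "\<rho> \<in> \<F> \<Longrightarrow> f \<in> E \<Longrightarrow> s \<in> S \<Longrightarrow> r_map T \<rho> f (\<rho> `` {s}) = \<rho> `` {f s}"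
  by (rule r_map_class) (auto intro: equiv_F E_invariant)

lemma hatrel_iff:
  assumes \<rho>: "\<rho> \<in> \<F>"
  shows "(f, g) \<in> hatrel T \<rho> E \<longleftrightarrow> f \<in> E \<and> g \<in> E \<and> (\<forall>s\<in>S. (f s, g s) \<in> \<rho>)"
proof -
  have "r_map T \<rho> f = r_map T \<rho> g \<longleftrightarrow> (\<forall>s\<in>S. (f s, g s) \<in> \<rho>)" if f: "f \<in> E" and g: "g \<in> E"
  proof
    assume eq: "r_map T \<rho> f = r_map T \<rho> g"
    show "\<forall>s\<in>S. (f s, g s) \<in> \<rho>"
    proof
      fix s assume s: "s \<in> S"
      have "\<rho> `` {f s} = \<rho> `` {g s}"
        using eq r_map_class_E[OF \<rho> f s] r_map_class_E[OF \<rho> g s] by simp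
      then show "(f s, g s) \<in> \<rho>"
        using eq_equiv_class_iff[OF equiv_F[OF \<rho>] E_maps[OF f s] E_maps[OF g s]] by blast
    qed
  next
    assume pw: "\<forall>s\<in>S. (f s, g s) \<in> \<rho>"
    show "r_map T \<rho> f = r_map T \<rho> g"
    proof
      fix C
      show "r_map T \<rho> f C = r_map T \<rho> g C"
      proof (cases "C \<in> S // \<rho>")
        case True
        then obtain s where s: "s \<in> S" "C = \<rho> `` {s}" by (auto elim: quotientE)
        then show ?thesis
          using r_map_class_E[OF \<rho> f s(1)] r_map_class_E[OF \<rho> g s(1)] pw
            equiv_class_eq[OF equiv_F[OF \<rho>]] by simp
      next
        case False
        then show ?thesis by (simp add: r_map_def)
      qed
    qed
  qed
  then show ?thesis unfolding hatrel_def by blast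
qed

lemma hatrel_class:
  "\<rho> \<in> \<F> \<Longrightarrow> f \<in> E \<Longrightarrow> hatrel T \<rho> E `` {f} = {g \<in> E. \<forall>s\<in>S. (f s, g s) \<in> \<rho>}"
  using hatrel_iff by auto

lemma hatrel_mono: "\<rho> \<in> \<F> \<Longrightarrow> \<sigma> \<in> \<F> \<Longrightarrow> \<rho> \<subseteq> \<sigma> \<Longrightarrow> hatrel T \<rho> E \<subseteq> hatrel T \<sigma> E"
  by (auto simp: hatrel_iff) blast

text \<open>The class of \<open>f\<close> is cut out by the finitely many subbasic conditions
  \<open>g ` C \<subseteq> U\<close> with \<open>C\<close>, \<open>U\<close> classes of \<open>\<rho>\<close> and \<open>f ` C \<subseteq> U\<close>.\<close>

lemma openin_hatrel_class:
  assumes \<rho>: "\<rho> \<in> \<F>" and f: "f \<in> E"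
  shows "openin CO (hatrel T \<rho> E `` {f})"
proof -
  have e: "equiv S \<rho>" using equiv_F[OF \<rho>] .
  define P where "P = {(C, U) \<in> (S // \<rho>) \<times> (S // \<rho>). f ` C \<subseteq> U}"
  define \<G> where "\<G> = insert UNIV ((\<lambda>(C, U). {g. g ` C \<subseteq> U}) ` P)"
  have "finite (S // \<rho>)"
    by (rule finite_quotient_open_classes[OF compact e openin_class_F[OF \<rho>]])
  then have "finite P" unfolding P_def by (auto intro: finite_subset[of _ "S // \<rho> \<times> S // \<rho>"])
  then have fin: "finite \<G>" unfolding \<G>_def by simp
  have "\<G> \<subseteq> compact_open_subbasis T"
  proof
    fix X assume "X \<in> \<G>"
    then consider "X = UNIV" | C U where "(C, U) \<in> P" "X = {g. g ` C \<subseteq> U}"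
      unfolding \<G>_def by blast
    then show "X \<in> compact_open_subbasis T"
    proof cases
      case 1
      then show ?thesis using UNIV_in_compact_open_subbasis by simp
    next
      case 2
      then have C: "C \<in> S // \<rho>" and U: "U \<in> S // \<rho>" unfolding P_def by auto
      have "compactin T C"
        using C closedin_compact_space[OF compact] closedin_equiv_class[OF e openin_class_F[OF \<rho>]]
        by (auto elim: quotientE)
      moreover have "openin T U" using U openin_class_F[OF \<rho>] by (auto elim: quotientE)
      ultimately show ?thesis using 2(2) unfolding compact_open_subbasis_def by blast
    qed
  qed
  then have "openin (topology_generated_by (compact_open_subbasis T)) (\<Inter>\<G>)"
    unfolding openin_topology_generated_by_iff using fin
    by (intro generate_topology_on_Inter) (auto simp: \<G>_def intro: generate_topology_on.Basis)
  moreover have "hatrel T \<rho> E `` {f} = \<Inter>\<G> \<inter> E"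
  proof
    show "hatrel T \<rho> E `` {f} \<subseteq> \<Inter>\<G> \<inter> E"
    proof
      fix g assume "g \<in> hatrel T \<rho> E `` {f}"
      then have g: "g \<in> E" "\<forall>s\<in>S. (f s, g s) \<in> \<rho>" using hatrel_class[OF \<rho> f] by auto
      have "g ` C \<subseteq> U" if "(C, U) \<in> P" for C U
      proof
        fix y assume "y \<in> g ` C"
        then obtain x where x: "x \<in> C" "y = g x" by blast
        have C: "C \<in> S // \<rho>" and U: "U \<in> S // \<rho>" and fCU: "f ` C \<subseteq> U"
          using that unfolding P_def by auto
        have "x \<in> S" using in_quotient_imp_subset[OF e C] x(1) by blast
        then show "y \<in> U" using in_quotient_imp_closed[OF e U] fCU x g(2) by blast
      qed
      then show "g \<in> \<Inter>\<G> \<inter> E" using g(1) unfolding \<G>_def by auto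
    qed
  next
    show "\<Inter>\<G> \<inter> E \<subseteq> hatrel T \<rho> E `` {f}"
    proof
      fix g assume g: "g \<in> \<Inter>\<G> \<inter> E"
      have "(f s, g s) \<in> \<rho>" if s: "s \<in> S" for s
      proof -
        have "f ` (\<rho> `` {s}) \<subseteq> \<rho> `` {f s}" using E_invariant[OF \<rho> f] by blast
        then have "(\<rho> `` {s}, \<rho> `` {f s}) \<in> P"
          unfolding P_def using s E_maps[OF f s] by (auto intro: quotientI)
        then have "g ` (\<rho> `` {s}) \<subseteq> \<rho> `` {f s}" using g unfolding \<G>_def by blast
        then show ?thesis using equiv_class_self[OF e s] by blast
      qed
      then show "g \<in> hatrel T \<rho> E `` {f}" using hatrel_class[OF \<rho> f] g by blast
    qed
  qed
  ultimately show ?thesis unfolding compact_open_generated openin_subtopology by blast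
qed

lemma generated_open_contains_hatrel_classes:
  assumes "generate_topology_on (compact_open_subbasis T) V"
  shows "\<forall>f \<in> E \<inter> V. \<exists>\<rho>\<in>\<F>. hatrel T \<rho> E `` {f} \<subseteq> V"
  using assms
proof (induction rule: generate_topology_on.induct)
  case Empty
  then show ?case by simp
next
  case (Int a b)
  show ?case
  proof
    fix f assume f: "f \<in> E \<inter> (a \<inter> b)"
    then obtain \<rho>a \<rho>b where \<rho>a: "\<rho>a \<in> \<F>" "hatrel T \<rho>a E `` {f} \<subseteq> a"
      and \<rho>b: "\<rho>b \<in> \<F>" "hatrel T \<rho>b E `` {f} \<subseteq> b"
      using Int.IH by blast
    obtain \<rho> where \<rho>: "\<rho> \<in> \<F>" "\<forall>\<alpha>\<in>{\<rho>a, \<rho>b}. \<rho> \<subseteq> \<alpha>"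
      using F_finite_lower_bound[of "{\<rho>a, \<rho>b}"] \<rho>a(1) \<rho>b(1) by auto
    then have "hatrel T \<rho> E `` {f} \<subseteq> a \<inter> b"
      using hatrel_mono[OF \<rho>(1) \<rho>a(1)] hatrel_mono[OF \<rho>(1) \<rho>b(1)] \<rho>a(2) \<rho>b(2) by blast
    then show "\<exists>\<rho>\<in>\<F>. hatrel T \<rho> E `` {f} \<subseteq> a \<inter> b" using \<rho>(1) by blast
  qed
next
  case (UN \<K>)
  then show ?case by blast
next
  case (Basis X)
  then obtain K U where X: "X = {g. g ` K \<subseteq> U}" and K: "compactin T K" and U: "openin T U"
    unfolding compact_open_subbasis_def by blast
  show ?case
  proof
    fix f assume f: "f \<in> E \<inter> X"
    have "compactin T (f ` K)"
      using image_compactin[OF K] f E_endo unfolding endo_def by blast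
    moreover have "f ` K \<subseteq> U" using f X by blast
    ultimately obtain \<rho> where \<rho>: "\<rho> \<in> \<F>" "\<rho> `` (f ` K) \<subseteq> U"
      by (rule image_subset_open[OF _ U])
    have "hatrel T \<rho> E `` {f} \<subseteq> X"
    proof
      fix g assume "g \<in> hatrel T \<rho> E `` {f}"
      then have "\<forall>x\<in>S. (f x, g x) \<in> \<rho>" using hatrel_class[OF \<rho>(1)] f by blast
      then have "g ` K \<subseteq> \<rho> `` (f ` K)" using compactin_subset_topspace[OF K] by blast
      then show "g \<in> X" using \<rho>(2) X by blast
    qed
    then show "\<exists>\<rho>\<in>\<F>. hatrel T \<rho> E `` {f} \<subseteq> X" using \<rho>(1) by blast
  qed
qed

lemma hatrel_class_subset_open:
  assumes W: "openin CO W" and f: "f \<in> W"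
  obtains \<rho> where "\<rho> \<in> \<F>" "hatrel T \<rho> E `` {f} \<subseteq> W"
proof -
  obtain V where V: "openin (topology_generated_by (compact_open_subbasis T)) V" "W = V \<inter> E"
    using W unfolding compact_open_generated openin_subtopology by blast
  then have "generate_topology_on (compact_open_subbasis T) V"
    by (simp add: openin_topology_generated_by_iff)
  then obtain \<rho> where "\<rho> \<in> \<F>" "hatrel T \<rho> E `` {f} \<subseteq> V"
    using generated_open_contains_hatrel_classes f V(2) by blast
  moreover have "hatrel T \<rho> E `` {f} \<subseteq> E" unfolding hatrel_def by blast
  ultimately show ?thesis using that V(2) by blast
qed

lemma continuous_map_hatrel_invariant:
  assumes \<rho>: "\<rho> \<in> \<F>" and into: "\<And>f. f \<in> E \<Longrightarrow> \<phi> f \<in> topspace Y"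
    and invariant: "\<And>f g. (f, g) \<in> hatrel T \<rho> E \<Longrightarrow> \<phi> f = \<phi> g"
  shows "continuous_map CO Y \<phi>"
  unfolding continuous_map_def topspace_compact_open
proof (intro conjI allI impI)
  show "\<phi> \<in> E \<rightarrow> topspace Y" using into by blast
  fix U assume "openin Y U"
  show "openin CO {f \<in> E. \<phi> f \<in> U}"
  proof (subst openin_subopen, intro ballI)
    fix f assume f: "f \<in> {f \<in> E. \<phi> f \<in> U}"
    have "hatrel T \<rho> E `` {f} \<subseteq> {f \<in> E. \<phi> f \<in> U}"
    proof
      fix g assume "g \<in> hatrel T \<rho> E `` {f}"
      then have "(f, g) \<in> hatrel T \<rho> E" by simp
      then show "g \<in> {f \<in> E. \<phi> f \<in> U}" using invariant[of f g] f unfolding hatrel_def by auto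
    qed
    moreover have "f \<in> hatrel T \<rho> E `` {f}" using equiv_class_self[OF equiv_hatrel] f by blast
    ultimately show "\<exists>V. openin CO V \<and> f \<in> V \<and> V \<subseteq> {f \<in> E. \<phi> f \<in> U}"
      using openin_hatrel_class[OF \<rho>] f by blast
  qed
qed

lemma open_congruence_hatrel:
  assumes \<rho>: "\<rho> \<in> \<F>"
  shows "open_congruence CO (comp_op T) (hatrel T \<rho> E)"
proof -
  have e: "equiv (topspace CO) (hatrel T \<rho> E)"
    unfolding topspace_compact_open by (rule equiv_hatrel)
  have compatible: "(comp_op T h f, comp_op T h g) \<in> hatrel T \<rho> E \<and>
      (comp_op T f h, comp_op T g h) \<in> hatrel T \<rho> E"
    if fg: "(f, g) \<in> hatrel T \<rho> E" and h: "h \<in> E" for f g h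
  proof -
    have f: "f \<in> E" and g: "g \<in> E" and pw: "\<forall>s\<in>S. (f s, g s) \<in> \<rho>"
      using fg hatrel_iff[OF \<rho>] by blast+
    have "\<forall>s\<in>S. (h (f s), h (g s)) \<in> \<rho>" using pw E_invariant[OF \<rho> h] by blast
    moreover have "\<forall>s\<in>S. (f (h s), g (h s)) \<in> \<rho>" using pw E_maps[OF h] by blast
    ultimately show ?thesis
      using comp_op_closed f g h by (simp add: hatrel_iff[OF \<rho>] comp_op_apply)
  qed
  have "openin CO (hatrel T \<rho> E `` {f})" for f
  proof (cases "f \<in> E")
    case True
    then show ?thesis by (rule openin_hatrel_class[OF \<rho>])
  next
    case False
    then have "hatrel T \<rho> E `` {f} = {}" unfolding hatrel_def by blast
    then show ?thesis by simp
  qed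
  then have "openin (prod_topology CO CO) (hatrel T \<rho> E)"
    by (rule openin_equiv_open_classes[OF e])
  then show ?thesis
    using e compatible unfolding open_congruence_def congruence_def topspace_compact_open by blast
qed

subsection \<open>The canonical map to the projective limit\<close>

lemma equiv_H: "R \<in> \<H> \<Longrightarrow> equiv E R"
  using equiv_hatrel by blast

lemma canon_apply: "R \<in> \<H> \<Longrightarrow> canon \<H> f R = R `` {f}"
  by (simp add: canon_def)

lemma canon_in_projlim:
  assumes f: "f \<in> E"
  shows "canon \<H> f \<in> projlim E \<H>"
  unfolding projlim_def
proof (intro CollectI conjI ballI impI)
  show "canon \<H> f \<in> (\<Pi>\<^sub>E R\<in>\<H>. E // R)"
    unfolding canon_def using f by (auto intro: quotientI)
  fix R1 R2 assume R: "R1 \<in> \<H>" "R2 \<in> \<H>" "R1 \<subseteq> R2"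
  have "R2 `` (R1 `` {f}) = R2 `` {f}"
  proof
    show "R2 `` (R1 `` {f}) \<subseteq> R2 `` {f}"
      using R(3) equiv_H[OF R(2)] unfolding equiv_def trans_def by blast
    show "R2 `` {f} \<subseteq> R2 `` (R1 `` {f})"
      using equiv_class_self[OF equiv_H[OF R(1)] f] by blast
  qed
  then show "R2 `` canon \<H> f R1 = canon \<H> f R2" using R by (simp add: canon_apply)
qed

lemma inj_on_canon: "inj_on (canon \<H>) E"
proof (rule inj_onI)
  fix f g assume f: "f \<in> E" and g: "g \<in> E" and eq: "canon \<H> f = canon \<H> g"
  show "f = g"
  proof
    fix s
    show "f s = g s"
    proof (cases "s \<in> S")
      case True
      have "(f s, g s) \<in> \<rho>" if \<rho>: "\<rho> \<in> \<F>" for \<rho>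
      proof -
        have R: "hatrel T \<rho> E \<in> \<H>" using \<rho> by blast
        have "hatrel T \<rho> E `` {f} = hatrel T \<rho> E `` {g}"
          using fun_cong[OF eq, of "hatrel T \<rho> E"] by (simp add: canon_apply[OF R])
        then have "(f, g) \<in> hatrel T \<rho> E" using eq_equiv_class_iff[OF equiv_hatrel f g] by blast
        then show ?thesis using hatrel_iff[OF \<rho>] True by blast
      qed
      then show ?thesis using F_separates E_maps f g True by blast
    next
      case False
      have "f \<in> extensional S" "g \<in> extensional S" using f g E_endo by (auto simp: endo_def)
      then show ?thesis using False by (simp add: extensional_def)
    qed
  qed
qed

lemma topspace_projlim_top: "topspace (projlim_top CO \<H>) = projlim E \<H>"
proof -
  have "topspace (quot_top CO R) = E // R" if "R \<in> \<H>" for R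
    using topspace_quot_top[of CO R] equiv_H[OF that] by (simp add: topspace_compact_open)
  then have "topspace (product_topology (quot_top CO) \<H>) = (\<Pi>\<^sub>E R\<in>\<H>. E // R)"
    by (simp add: topspace_product_topology cong: PiE_cong)
  moreover have "projlim E \<H> \<subseteq> (\<Pi>\<^sub>E R\<in>\<H>. E // R)" unfolding projlim_def by blast
  ultimately show ?thesis
    unfolding projlim_top_def topspace_subtopology topspace_compact_open by blast
qed

lemma continuous_map_canon: "continuous_map CO (projlim_top CO \<H>) (canon \<H>)"
  unfolding projlim_top_def topspace_compact_open
proof (rule continuous_map_into_subtopology)
  show "canon \<H> \<in> topspace CO \<rightarrow> projlim E \<H>"
    using canon_in_projlim by (simp add: topspace_compact_open)
  show "continuous_map CO (product_topology (quot_top CO) \<H>) (canon \<H>)"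
    unfolding continuous_map_componentwise
  proof (intro conjI ballI)
    show "canon \<H> ` topspace CO \<subseteq> extensional \<H>" unfolding canon_def by auto
    fix R assume R: "R \<in> \<H>"
    then obtain \<rho> where \<rho>: "\<rho> \<in> \<F>" "R = hatrel T \<rho> E" by blast
    show "continuous_map CO (quot_top CO R) (\<lambda>f. canon \<H> f R)"
    proof (rule continuous_map_hatrel_invariant[OF \<rho>(1)])
      fix f assume "f \<in> E"
      then show "canon \<H> f R \<in> topspace (quot_top CO R)"
        using topspace_quot_top[of CO R] equiv_H[OF R] R
        by (simp add: canon_apply topspace_compact_open quotientI)
    next
      fix f g assume "(f, g) \<in> hatrel T \<rho> E"
      then show "canon \<H> f R = canon \<H> g R"
        using R \<rho>(2) equiv_class_eq[OF equiv_H[OF R]] by (simp add: canon_apply)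
    qed
  qed
qed

lemma openin_projlim_coordinate:
  assumes \<rho>: "\<rho> \<in> \<F>" and f: "f \<in> E"
  shows "openin (projlim_top CO \<H>)
    {x \<in> projlim E \<H>. x (hatrel T \<rho> E) = hatrel T \<rho> E `` {f}}"
proof -
  let ?R = "hatrel T \<rho> E"
  have R: "?R \<in> \<H>" using \<rho> by blast
  have e: "equiv (topspace CO) ?R" by (simp add: topspace_compact_open equiv_hatrel)
  have "openin (quot_top CO ?R) {?R `` {f}}"
    unfolding openin_quot_top[OF e] topspace_compact_open
    using openin_hatrel_class[OF \<rho> f] f by (auto intro: quotientI)
  then have "openin (product_topology (quot_top CO) \<H>)
      {x \<in> topspace (product_topology (quot_top CO) \<H>). x ?R \<in> {?R `` {f}}}"
    by (rule openin_continuous_map_preimage[OF continuous_map_product_projection[OF R]])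
  moreover have "{x \<in> projlim E \<H>. x ?R = ?R `` {f}} =
      {x \<in> topspace (product_topology (quot_top CO) \<H>). x ?R \<in> {?R `` {f}}} \<inter> projlim (topspace CO) \<H>"
    using topspace_projlim_top unfolding projlim_top_def topspace_subtopology topspace_compact_open
    by blast
  ultimately show ?thesis unfolding projlim_top_def openin_subtopology by blast
qed

lemma canon_image_hatrel_class:
  assumes surj: "projlim E \<H> \<subseteq> canon \<H> ` E" and \<rho>: "\<rho> \<in> \<F>" and f: "f \<in> E"
  shows "canon \<H> ` (hatrel T \<rho> E `` {f}) =
    {x \<in> projlim E \<H>. x (hatrel T \<rho> E) = hatrel T \<rho> E `` {f}}"
proof -
  let ?R = "hatrel T \<rho> E"
  have R: "?R \<in> \<H>" using \<rho> by blast
  have "canon \<H> g \<in> projlim E \<H> \<and> canon \<H> g ?R = ?R `` {f} \<longleftrightarrow> g \<in> ?R `` {f}"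
    if "g \<in> E" for g
    using that f canon_in_projlim equiv_class_eq_iff[OF equiv_hatrel, of f g]
    by (auto simp: canon_apply[OF R])
  moreover have "?R `` {f} \<subseteq> E" unfolding hatrel_def by blast
  ultimately show ?thesis using surj by blast
qed

lemma open_map_canon:
  assumes surj: "projlim E \<H> \<subseteq> canon \<H> ` E"
  shows "open_map CO (projlim_top CO \<H>) (canon \<H>)"
  unfolding open_map_def
proof (intro allI impI)
  fix U assume U: "openin CO U"
  have "\<forall>f\<in>U. \<exists>\<rho>. \<rho> \<in> \<F> \<and> hatrel T \<rho> E `` {f} \<subseteq> U"
  proof
    fix f assume "f \<in> U"
    then obtain \<rho> where "\<rho> \<in> \<F>" "hatrel T \<rho> E `` {f} \<subseteq> U"
      by (rule hatrel_class_subset_open[OF U])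
    then show "\<exists>\<rho>. \<rho> \<in> \<F> \<and> hatrel T \<rho> E `` {f} \<subseteq> U" by blast
  qed
  then obtain r where r: "\<forall>f\<in>U. r f \<in> \<F> \<and> hatrel T (r f) E `` {f} \<subseteq> U"
    by (rule bchoice[THEN exE])
  have UE: "U \<subseteq> E" using openin_subset[OF U] by (simp add: topspace_compact_open)
  have "U = (\<Union>f\<in>U. hatrel T (r f) E `` {f})"
    using r UE equiv_class_self[OF equiv_hatrel] by blast
  then have "canon \<H> ` U = (\<Union>f\<in>U. canon \<H> ` (hatrel T (r f) E `` {f}))" by blast
  also have "\<dots> = (\<Union>f\<in>U. {x \<in> projlim E \<H>. x (hatrel T (r f) E) = hatrel T (r f) E `` {f}})"
    using canon_image_hatrel_class[OF surj] r UE by (intro SUP_cong) blast+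
  finally show "openin (projlim_top CO \<H>) (canon \<H> ` U)"
    using openin_projlim_coordinate r UE by (auto intro!: openin_Union)
qed

lemma canon_comp_op:
  assumes f: "f \<in> E" and g: "g \<in> E"
  shows "canon \<H> (comp_op T f g) = (\<lambda>R\<in>\<H>. qmult R (comp_op T) (canon \<H> f R) (canon \<H> g R))"
proof
  fix R
  show "canon \<H> (comp_op T f g) R = (\<lambda>R\<in>\<H>. qmult R (comp_op T) (canon \<H> f R) (canon \<H> g R)) R"
  proof (cases "R \<in> \<H>")
    case True
    then obtain \<rho> where "\<rho> \<in> \<F>" "R = hatrel T \<rho> E" by blast
    then have "congruence E (comp_op T) R"
      using open_congruence_hatrel unfolding open_congruence_def topspace_compact_open by blast
    then show ?thesis using qmult_classes[OF _ f g] True by (simp add: canon_apply)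
  next
    case False
    then show ?thesis by (simp add: canon_def)
  qed
qed

subsection \<open>Coherent families and their pointwise limits\<close>

lemma projlim_representatives:
  assumes x: "x \<in> projlim E \<H>"
  obtains g where "\<forall>\<rho>\<in>\<F>. g \<rho> \<in> E \<and> x (hatrel T \<rho> E) = hatrel T \<rho> E `` {g \<rho>}"
    "coherent_family g"
proof -
  have "\<forall>\<rho>\<in>\<F>. \<exists>h. h \<in> E \<and> x (hatrel T \<rho> E) = hatrel T \<rho> E `` {h}"
  proof
    fix \<rho> assume "\<rho> \<in> \<F>"
    then have "x (hatrel T \<rho> E) \<in> E // hatrel T \<rho> E" using x unfolding projlim_def by blast
    then show "\<exists>h. h \<in> E \<and> x (hatrel T \<rho> E) = hatrel T \<rho> E `` {h}" by (auto elim: quotientE)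
  qed
  then obtain g where g: "\<forall>\<rho>\<in>\<F>. g \<rho> \<in> E \<and> x (hatrel T \<rho> E) = hatrel T \<rho> E `` {g \<rho>}"
    by (rule bchoice[THEN exE])
  then have gE: "\<And>\<rho>. \<rho> \<in> \<F> \<Longrightarrow> g \<rho> \<in> E"
    and xg: "\<And>\<rho>. \<rho> \<in> \<F> \<Longrightarrow> x (hatrel T \<rho> E) = hatrel T \<rho> E `` {g \<rho>}" by blast+
  have compat: "\<forall>R1\<in>\<H>. \<forall>R2\<in>\<H>. R1 \<subseteq> R2 \<longrightarrow> R2 `` (x R1) = x R2"
    using x unfolding projlim_def mem_Collect_eq by (rule conjunct2)
  have "(g \<sigma> s, g \<rho> s) \<in> \<rho>"
    if \<rho>: "\<rho> \<in> \<F>" and \<sigma>: "\<sigma> \<in> \<F>" and "\<sigma> \<subseteq> \<rho>" and s: "s \<in> S" for \<rho> \<sigma> s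
  proof -
    have sub: "hatrel T \<sigma> E \<subseteq> hatrel T \<rho> E" by (rule hatrel_mono[OF \<sigma> \<rho> \<open>\<sigma> \<subseteq> \<rho>\<close>])
    have "hatrel T \<rho> E `` (hatrel T \<sigma> E `` {g \<sigma>}) = hatrel T \<rho> E `` {g \<rho>}"
      using compat[rule_format, OF imageI[OF \<sigma>] imageI[OF \<rho>] sub] xg[OF \<sigma>] xg[OF \<rho>] by simp
    moreover have "g \<sigma> \<in> hatrel T \<rho> E `` (hatrel T \<sigma> E `` {g \<sigma>})"
      using sub equiv_class_self[OF equiv_hatrel gE[OF \<sigma>]] by blast
    ultimately have "(g \<rho>, g \<sigma>) \<in> hatrel T \<rho> E" by blast
    then show ?thesis using hatrel_iff[OF \<rho>] s F_symD[OF \<rho>] by blast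
  qed
  then have "coherent_family g" unfolding coherent_family_def by blast
  then show ?thesis using that g by blast
qed

lemma coherent_family_pointwise_limit:
  assumes g: "\<And>\<rho>. \<rho> \<in> \<F> \<Longrightarrow> g \<rho> \<in> E" and coherent: "coherent_family g"
  obtains f where "f \<in> S \<rightarrow>\<^sub>E S" "pointwise_limit g f"
proof -
  have ex: "\<exists>y. y \<in> S \<and> (\<forall>\<rho>\<in>\<F>. (y, g \<rho> s) \<in> \<rho>)" if s: "s \<in> S" for s
    by (rule coherent_family_limit[of "\<lambda>\<rho>. g \<rho> s"])
      (use coherent s E_maps g in \<open>auto simp: coherent_family_def\<close>)
  define f where "f = (\<lambda>s\<in>S. SOME y. y \<in> S \<and> (\<forall>\<rho>\<in>\<F>. (y, g \<rho> s) \<in> \<rho>))"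
  have f: "f s \<in> S \<and> (\<forall>\<rho>\<in>\<F>. (f s, g \<rho> s) \<in> \<rho>)" if "s \<in> S" for s
    unfolding f_def using someI_ex[OF ex[OF that]] that by simp
  have "f \<in> extensional S" unfolding f_def by simp
  then have "f \<in> S \<rightarrow>\<^sub>E S" using f by (simp add: PiE_iff)
  moreover have "pointwise_limit g f" unfolding pointwise_limit_def using f by blast
  ultimately show ?thesis by (rule that)
qed

lemma pointwise_limit_hom:
  assumes g: "\<And>\<rho>. \<rho> \<in> \<F> \<Longrightarrow> g \<rho> \<in> E" and f: "\<And>s. s \<in> S \<Longrightarrow> f s \<in> S"
    and lim: "pointwise_limit g f" and x: "x \<in> S" and y: "y \<in> S"
  shows "f (m x y) = m (f x) (f y)"
proof (rule F_separates)
  have mxy: "m x y \<in> S" using topsemigroup_closed[OF topsemigroup x y] .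
  show "f (m x y) \<in> S" using f[OF mxy] .
  show "m (f x) (f y) \<in> S" using topsemigroup_closed[OF topsemigroup f[OF x] f[OF y]] .
  fix \<rho> assume \<rho>: "\<rho> \<in> \<F>"
  have "(f (m x y), g \<rho> (m x y)) \<in> \<rho>" using lim \<rho> mxy unfolding pointwise_limit_def by blast
  moreover have "g \<rho> (m x y) = m (g \<rho> x) (g \<rho> y)"
    using g[OF \<rho>] E_endo x y unfolding endo_def by blast
  moreover have "(m (g \<rho> x) (g \<rho> y), m (f x) (f y)) \<in> \<rho>"
    using congruence_mult[OF congruence_F[OF \<rho>]] F_symD[OF \<rho>] lim \<rho> x y
    unfolding pointwise_limit_def by blast
  ultimately show "(f (m x y), m (f x) (f y)) \<in> \<rho>" using F_transD[OF \<rho>] by metis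
qed

lemma pointwise_limit_continuous:
  assumes g: "\<And>\<rho>. \<rho> \<in> \<F> \<Longrightarrow> g \<rho> \<in> E" and f: "\<And>s. s \<in> S \<Longrightarrow> f s \<in> S"
    and lim: "pointwise_limit g f"
  shows "continuous_map T T f"
  unfolding continuous_map_def
proof (intro conjI allI impI)
  show "f \<in> S \<rightarrow> S" using f by blast
  fix U assume U: "openin T U"
  show "openin T {x \<in> S. f x \<in> U}"
  proof (subst openin_subopen, intro ballI)
    fix s assume s: "s \<in> {x \<in> S. f x \<in> U}"
    then obtain \<rho> where \<rho>: "\<rho> \<in> \<F>" "\<rho> `` {f s} \<subseteq> U"
      using class_subset_open[OF U] by blast
    have "\<rho> `` {s} \<subseteq> {x \<in> S. f x \<in> U}"
    proof
      fix t assume "t \<in> \<rho> `` {s}"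
      then have st: "(s, t) \<in> \<rho>" and t: "t \<in> S" using equiv_type[OF equiv_F[OF \<rho>(1)]] by blast+
      have "(f s, g \<rho> s) \<in> \<rho>" "(g \<rho> t, f t) \<in> \<rho>"
        using lim \<rho>(1) s t F_symD[OF \<rho>(1)] unfolding pointwise_limit_def by blast+
      moreover have "(g \<rho> s, g \<rho> t) \<in> \<rho>" using E_invariant[OF \<rho>(1) g[OF \<rho>(1)] st] .
      ultimately have "(f s, f t) \<in> \<rho>" using F_transD[OF \<rho>(1)] by metis
      then show "t \<in> {x \<in> S. f x \<in> U}" using \<rho>(2) t by blast
    qed
    moreover have "s \<in> \<rho> `` {s}" using equiv_class_self[OF equiv_F[OF \<rho>(1)]] s by blast
    ultimately show "\<exists>V. openin T V \<and> s \<in> V \<and> V \<subseteq> {x \<in> S. f x \<in> U}"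
      using openin_class_F[OF \<rho>(1)] by blast
  qed
qed

lemma coherent_family_limit_in_endo:
  assumes g: "\<And>\<rho>. \<rho> \<in> \<F> \<Longrightarrow> g \<rho> \<in> E" and coherent: "coherent_family g"
  obtains f where "f \<in> endo T m" "pointwise_limit g f"
proof -
  obtain f where f: "f \<in> S \<rightarrow>\<^sub>E S" "pointwise_limit g f"
    by (rule coherent_family_pointwise_limit[OF g coherent])
  have maps: "\<And>s. s \<in> S \<Longrightarrow> f s \<in> S" using f(1) by auto
  have "f \<in> endo T m"
    using f(1) pointwise_limit_continuous[OF g maps f(2)] pointwise_limit_hom[OF g maps f(2)]
    unfolding endo_def PiE_def by blast
  then show ?thesis using that f(2) by blast
qed

lemma canon_pointwise_limit:
  assumes x: "x \<in> projlim E \<H>" and g: "\<And>\<rho>. \<rho> \<in> \<F> \<Longrightarrow> g \<rho> \<in> E"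
    and xg: "\<And>\<rho>. \<rho> \<in> \<F> \<Longrightarrow> x (hatrel T \<rho> E) = hatrel T \<rho> E `` {g \<rho>}"
    and f: "f \<in> E" and lim: "pointwise_limit g f"
  shows "canon \<H> f = x"
proof
  fix R
  show "canon \<H> f R = x R"
  proof (cases "R \<in> \<H>")
    case True
    then obtain \<rho> where \<rho>: "\<rho> \<in> \<F>" "R = hatrel T \<rho> E" by blast
    have "(f, g \<rho>) \<in> hatrel T \<rho> E"
      using f g[OF \<rho>(1)] lim \<rho>(1) unfolding hatrel_iff[OF \<rho>(1)] pointwise_limit_def by blast
    then have "hatrel T \<rho> E `` {f} = hatrel T \<rho> E `` {g \<rho>}" by (rule equiv_class_eq[OF equiv_hatrel])
    then show ?thesis using xg[OF \<rho>(1)] \<rho>(2) True by (simp add: canon_apply)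
  next
    case False
    have "x \<in> (\<Pi>\<^sub>E R\<in>\<H>. E // R)" using x unfolding projlim_def by blast
    then have "x R = undefined" using PiE_arb False by metis
    then show ?thesis using False by (simp add: canon_def)
  qed
qed

lemma projlim_subset_canon_image:
  assumes limit_closed: "\<And>g f. (\<And>\<rho>. \<rho> \<in> \<F> \<Longrightarrow> g \<rho> \<in> E) \<Longrightarrow> coherent_family g \<Longrightarrow>
      f \<in> endo T m \<Longrightarrow> pointwise_limit g f \<Longrightarrow> f \<in> E"
  shows "projlim E \<H> \<subseteq> canon \<H> ` E"
proof
  fix x assume x: "x \<in> projlim E \<H>"
  obtain g where gx: "\<forall>\<rho>\<in>\<F>. g \<rho> \<in> E \<and> x (hatrel T \<rho> E) = hatrel T \<rho> E `` {g \<rho>}"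
    and coherent: "coherent_family g"
    by (rule projlim_representatives[OF x])
  then have g: "\<And>\<rho>. \<rho> \<in> \<F> \<Longrightarrow> g \<rho> \<in> E"
    and xg: "\<And>\<rho>. \<rho> \<in> \<F> \<Longrightarrow> x (hatrel T \<rho> E) = hatrel T \<rho> E `` {g \<rho>}" by blast+
  obtain f where f: "f \<in> endo T m" "pointwise_limit g f"
    by (rule coherent_family_limit_in_endo[OF g coherent])
  have "f \<in> E" using limit_closed[OF g coherent f] .
  then show "x \<in> canon \<H> ` E" using canon_pointwise_limit[OF x g xg _ f(2)] by blast
qed

theorem projlim_conclusion_if_limit_closed:
  assumes r_map_into: "\<And>\<rho> f. \<rho> \<in> \<F> \<Longrightarrow> f \<in> E \<Longrightarrow> r_map T \<rho> f \<in> Eq \<rho>"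
    and limit_closed: "\<And>g f. (\<And>\<rho>. \<rho> \<in> \<F> \<Longrightarrow> g \<rho> \<in> E) \<Longrightarrow> coherent_family g \<Longrightarrow>
      f \<in> endo T m \<Longrightarrow> pointwise_limit g f \<Longrightarrow> f \<in> E"
  shows "projlim_conclusion T \<F> E Eq"
proof -
  have "continuous_map CO (compact_open (quot_top T \<rho>) (Eq \<rho>)) (r_map T \<rho>)" if "\<rho> \<in> \<F>" for \<rho>
    using that r_map_into
    by (intro continuous_map_hatrel_invariant) (auto simp: topspace_compact_open hatrel_def)
  moreover have surj: "projlim E \<H> \<subseteq> canon \<H> ` E"
    by (rule projlim_subset_canon_image[OF limit_closed])
  then have bij: "bij_betw (canon \<H>) E (projlim E \<H>)"
    unfolding bij_betw_def using inj_on_canon canon_in_projlim by blast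
  then have "homeomorphic_map CO (projlim_top CO \<H>) (canon \<H>)"
    using continuous_map_canon open_map_canon[OF surj] topspace_projlim_top
    by (intro bijective_open_imp_homeomorphic_map) (auto simp: topspace_compact_open bij_betw_def)
  ultimately show ?thesis
    using open_congruence_hatrel canon_comp_op bij unfolding projlim_conclusion_def Let_def
    by (simp add: canon_def)
qed

lemma pointwise_limit_right_inverse:
  assumes g: "\<And>\<rho>. \<rho> \<in> \<F> \<Longrightarrow> g \<rho> \<in> E"
    and gh: "\<And>\<rho> x. \<rho> \<in> \<F> \<Longrightarrow> x \<in> S \<Longrightarrow> g \<rho> (h \<rho> x) = x"
    and f: "f \<in> endo T m" "pointwise_limit g f" and f': "f' \<in> endo T m" "pointwise_limit h f'"
    and y: "y \<in> S"
  shows "f (f' y) = y"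
proof (rule F_separates)
  show "f (f' y) \<in> S" using endo_maps[OF f(1) endo_maps[OF f'(1) y]] .
  show "y \<in> S" using y .
  fix \<rho> assume \<rho>: "\<rho> \<in> \<F>"
  have "(f (f' y), g \<rho> (f' y)) \<in> \<rho>"
    using f(2) \<rho> endo_maps[OF f'(1) y] unfolding pointwise_limit_def by blast
  moreover have "(g \<rho> (f' y), g \<rho> (h \<rho> y)) \<in> \<rho>"
    using E_invariant[OF \<rho> g[OF \<rho>]] f'(2) \<rho> y unfolding pointwise_limit_def by blast
  ultimately show "(f (f' y), y) \<in> \<rho>" using gh[OF \<rho> y] F_transD[OF \<rho>] by metis
qed

text \<open>The inverses of a coherent family of automorphisms form a coherent family too,
  and its limit inverts the limit of the family.\<close>

lemma pointwise_limit_in_aut: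
  assumes g: "\<And>\<rho>. \<rho> \<in> \<F> \<Longrightarrow> g \<rho> \<in> E" and h: "\<And>\<rho>. \<rho> \<in> \<F> \<Longrightarrow> h \<rho> \<in> E"
    and hg: "\<And>\<rho> x. \<rho> \<in> \<F> \<Longrightarrow> x \<in> S \<Longrightarrow> h \<rho> (g \<rho> x) = x"
    and gh: "\<And>\<rho> x. \<rho> \<in> \<F> \<Longrightarrow> x \<in> S \<Longrightarrow> g \<rho> (h \<rho> x) = x"
    and coherent: "coherent_family g" and f: "f \<in> endo T m" and lim: "pointwise_limit g f"
  shows "f \<in> aut T m"
proof -
  have "(h \<sigma> y, h \<rho> y) \<in> \<rho>"
    if \<rho>: "\<rho> \<in> \<F>" and \<sigma>: "\<sigma> \<in> \<F>" and "\<sigma> \<subseteq> \<rho>" and y: "y \<in> S" for \<rho> \<sigma> y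
  proof -
    have "(g \<sigma> (h \<rho> y), g \<rho> (h \<rho> y)) \<in> \<rho>"
      using coherent \<rho> \<sigma> \<open>\<sigma> \<subseteq> \<rho>\<close> E_maps[OF h[OF \<rho>] y] unfolding coherent_family_def by blast
    then have "(g \<sigma> (h \<rho> y), g \<sigma> (h \<sigma> y)) \<in> \<rho>" using gh \<rho> \<sigma> y by simp
    then have "(h \<sigma> (g \<sigma> (h \<rho> y)), h \<sigma> (g \<sigma> (h \<sigma> y))) \<in> \<rho>"
      by (rule E_invariant[OF \<rho> h[OF \<sigma>]])
    then show ?thesis using hg \<sigma> E_maps h \<rho> y F_symD[OF \<rho>] by simp
  qed
  then have coherent_h: "coherent_family h" unfolding coherent_family_def by blast
  obtain f' where f': "f' \<in> endo T m" "pointwise_limit h f'"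
    by (rule coherent_family_limit_in_endo[of h, OF h coherent_h])
  have "homeomorphic_maps T T f f'"
    using f f' pointwise_limit_right_inverse[OF g gh f lim f'] pointwise_limit_right_inverse[OF h hg f' f lim]
    unfolding homeomorphic_maps_def endo_def by blast
  then show ?thesis using f homeomorphic_maps_imp_map unfolding aut_def by blast
qed

end

context profinite_system
begin

lemma projlim_conclusion_endo:
  assumes "\<forall>\<rho>\<in>\<F>. fully_invariant T m \<rho>"
  shows "projlim_conclusion T \<F> (endo T m) (\<lambda>\<rho>. endo (quot_top T \<rho>) (qmult \<rho> m))"
proof -
  have invariant: "(f x, f y) \<in> \<rho>" if "\<rho> \<in> \<F>" "f \<in> endo T m" "(x, y) \<in> \<rho>" for \<rho> f x y
    using assms that unfolding fully_invariant_def by blast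
  interpret invariant_endomorphisms T m \<F> "endo T m"
    by (rule invariant_endomorphisms.intro[OF profinite_system_axioms], unfold_locales)
      (auto intro: comp_op_in_endo[OF topsemigroup] invariant)
  show ?thesis
  proof (rule projlim_conclusion_if_limit_closed)
    show "r_map T \<rho> f \<in> endo (quot_top T \<rho>) (qmult \<rho> m)" if "\<rho> \<in> \<F>" "f \<in> endo T m" for \<rho> f
      by (rule r_map_in_endo[OF topsemigroup congruence_F[OF that(1)] that(2)])
        (rule invariant[OF that])
  qed
qed

lemma projlim_conclusion_aut:
  assumes "\<forall>\<rho>\<in>\<F>. characteristic T m \<rho>"
  shows "projlim_conclusion T \<F> (aut T m) (\<lambda>\<rho>. aut (quot_top T \<rho>) (qmult \<rho> m))"
proof -
  have invariant: "(f x, f y) \<in> \<rho>" if "\<rho> \<in> \<F>" "f \<in> aut T m" "(x, y) \<in> \<rho>" for \<rho> f x y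
    using assms that unfolding characteristic_def by blast
  interpret invariant_endomorphisms T m \<F> "aut T m"
  proof (rule invariant_endomorphisms.intro[OF profinite_system_axioms], unfold_locales)
    show "aut T m \<subseteq> endo T m" by (auto simp: aut_def)
  qed (auto intro: comp_op_in_aut[OF topsemigroup] invariant)
  have inverse: "\<exists>h. h \<in> aut T m \<and> (\<forall>x\<in>S. h (f x) = x) \<and> (\<forall>x\<in>S. f (h x) = x)"
    if "f \<in> aut T m" for f
    by (rule aut_inverse[OF topsemigroup that]) blast
  show ?thesis
  proof (rule projlim_conclusion_if_limit_closed)
    fix \<rho> f assume \<rho>: "\<rho> \<in> \<F>" and f: "f \<in> aut T m"
    then obtain h where h: "h \<in> aut T m" "\<forall>x\<in>S. h (f x) = x" "\<forall>x\<in>S. f (h x) = x"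
      using inverse by blast
    show "r_map T \<rho> f \<in> aut (quot_top T \<rho>) (qmult \<rho> m)"
      by (rule r_map_in_aut[where g = h, OF topsemigroup congruence_F[OF \<rho>]])
        (use f h invariant[OF \<rho>] in \<open>auto simp: aut_def\<close>)
  next
    fix g f assume g: "\<And>\<rho>. \<rho> \<in> \<F> \<Longrightarrow> g \<rho> \<in> aut T m" and coherent: "coherent_family g"
      and f: "f \<in> endo T m" and lim: "pointwise_limit g f"
    have "\<forall>\<rho>\<in>\<F>. \<exists>h. h \<in> aut T m \<and> (\<forall>x\<in>S. h (g \<rho> x) = x) \<and> (\<forall>x\<in>S. g \<rho> (h x) = x)"
      using inverse g by blast
    then obtain h where "\<forall>\<rho>\<in>\<F>. h \<rho> \<in> aut T m \<and> (\<forall>x\<in>S. h \<rho> (g \<rho> x) = x) \<and>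
        (\<forall>x\<in>S. g \<rho> (h \<rho> x) = x)"
      by (rule bchoice[THEN exE])
    then show "f \<in> aut T m"
      by (intro pointwise_limit_in_aut[OF g _ _ _ coherent f lim]) auto
  qed
qed

end

theorem theorem9:
  fixes T :: "'a topology" and m :: "'a \<Rightarrow> 'a \<Rightarrow> 'a" and \<F> :: "'a rel set"
  assumes "profinite T m"
  shows "(fundamental_system T m \<F> \<and> (\<forall>\<rho>\<in>\<F>. fully_invariant T m \<rho>) \<longrightarrow>
            projlim_conclusion T \<F> (endo T m) (\<lambda>\<rho>. endo (quot_top T \<rho>) (qmult \<rho> m)))
       \<and> (fundamental_system T m \<F> \<and> (\<forall>\<rho>\<in>\<F>. characteristic T m \<rho>) \<longrightarrow>
            projlim_conclusion T \<F> (aut T m) (\<lambda>\<rho>. aut (quot_top T \<rho>) (qmult \<rho> m)))"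
  using profinite_system.projlim_conclusion_endo[OF profinite_system.intro[OF assms]]
    profinite_system.projlim_conclusion_aut[OF profinite_system.intro[OF assms]]
  by blast

end
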